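(* Let $G$ be a graph on $[n]$ which is a noncrossing bond of itself (i.e. the partition of $[n]$ into the vertex sets of the connected components of $G$ is noncrossing). Then $NC_G$ is graded if and only if for every cover relation $H\lessdot H'$ in $NC_G$, the partition $\pi(H')$ is obtained from $\pi(H)$ by merging exactly two blocks. Moreover, when $NC_G$ is graded, its rank function is $\rho(H)=n-cc(H)$, where $cc(H)$ is the number of connected components of $H$.
   Context: All graphs are finite simple graphs with vertex set $[n]=\{1,\dots,n\}$; edges are written $ij$ with $i<j$. A spanning subgraph is identified with its edge set. A bond of $G$ is a spanning subgraph each of whose connected components is an induced subgraph of $G$. For a bond $H$, $\pi(H)$ is the set partition of $[n]$ whose blocks are the vertex sets of the connected components of $H$. A set partition is crossing if there are distinct blocks $B,B'$ and $a,c\in B$, $b,d\in B'$ with $a<b<c<d$, and noncrossing otherwise; a bond $H$ is noncrossing if $\pi(H)$ is. $NC_G$ is the poset of noncrossing bonds of $G$ ordered by inclusion of edge sets. *)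

theory Defs
  imports Main
begin

text \<open>A finite simple graph on [n] = {1..n}: a set of edges (i,j) with 1 \<le> i < j \<le> n.
  Spanning subgraphs are identified with their edge sets.\<close>

definition simple_graph :: "nat \<Rightarrow> (nat \<times> nat) set \<Rightarrow> bool" where
  "simple_graph n E \<longleftrightarrow> E \<subseteq> {(i, j). 1 \<le> i \<and> i < j \<and> j \<le> n}"

definition component :: "nat \<Rightarrow> (nat \<times> nat) set \<Rightarrow> nat \<Rightarrow> nat set" where
  "component n H v = {u \<in> {1..n}. (v, u) \<in> (H \<union> H\<inverse>)\<^sup>*}"

definition comp_partition :: "nat \<Rightarrow> (nat \<times> nat) set \<Rightarrow> nat set set" where
  "comp_partition n H = component n H ` {1..n}"

definition cc :: "nat \<Rightarrow> (nat \<times> nat) set \<Rightarrow> nat" where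
  "cc n H = card (comp_partition n H)"

definition is_bond :: "nat \<Rightarrow> (nat \<times> nat) set \<Rightarrow> (nat \<times> nat) set \<Rightarrow> bool" where
  "is_bond n G H \<longleftrightarrow> H \<subseteq> G \<and>
     (\<forall>B \<in> comp_partition n H. \<forall>i j. (i, j) \<in> G \<and> i \<in> B \<and> j \<in> B \<longrightarrow> (i, j) \<in> H)"

definition crossing :: "nat set set \<Rightarrow> bool" where
  "crossing P \<longleftrightarrow> (\<exists>B \<in> P. \<exists>B' \<in> P. B \<noteq> B' \<and>
     (\<exists>a b c d. a \<in> B \<and> c \<in> B \<and> b \<in> B' \<and> d \<in> B' \<and> a < b \<and> b < c \<and> c < d))"

definition noncrossing :: "nat set set \<Rightarrow> bool" where
  "noncrossing P \<longleftrightarrow> \<not> crossing P"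

definition noncrossing_bond :: "nat \<Rightarrow> (nat \<times> nat) set \<Rightarrow> (nat \<times> nat) set \<Rightarrow> bool" where
  "noncrossing_bond n G H \<longleftrightarrow> is_bond n G H \<and> noncrossing (comp_partition n H)"

definition NC :: "nat \<Rightarrow> (nat \<times> nat) set \<Rightarrow> (nat \<times> nat) set set" where
  "NC n G = {H. noncrossing_bond n G H}"

text \<open>Generic notions for a poset given as a family P of sets ordered by inclusion.\<close>

definition covers :: "'a set set \<Rightarrow> 'a set \<Rightarrow> 'a set \<Rightarrow> bool" where
  "covers P x y \<longleftrightarrow> x \<in> P \<and> y \<in> P \<and> x \<subset> y \<and> \<not> (\<exists>z \<in> P. x \<subset> z \<and> z \<subset> y)"

definition is_chain :: "'a set set \<Rightarrow> 'a set set \<Rightarrow> bool" where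
  "is_chain P C \<longleftrightarrow> C \<subseteq> P \<and> (\<forall>x \<in> C. \<forall>y \<in> C. x \<subseteq> y \<or> y \<subseteq> x)"

definition maximal_chain :: "'a set set \<Rightarrow> 'a set set \<Rightarrow> bool" where
  "maximal_chain P C \<longleftrightarrow> is_chain P C \<and> \<not> (\<exists>D. is_chain P D \<and> C \<subset> D)"

definition graded :: "'a set set \<Rightarrow> bool" where
  "graded P \<longleftrightarrow> (\<forall>C D. maximal_chain P C \<and> maximal_chain P D \<longrightarrow> card C = card D)"

text \<open>Rank of x: length (number of elements minus one) of a longest chain with top element x;
  for a graded poset this is its rank function.\<close>
definition poset_rank :: "'a set set \<Rightarrow> 'a set \<Rightarrow> nat" where
  "poset_rank P x = Max {card C - 1 | C. is_chain P C \<and> finite C \<and> x \<in> C \<and> (\<forall>y \<in> C. y \<subseteq> x)}"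

definition merges_two_blocks :: "'a set set \<Rightarrow> 'a set set \<Rightarrow> bool" where
  "merges_two_blocks p p' \<longleftrightarrow> (\<exists>B1 \<in> p. \<exists>B2 \<in> p. B1 \<noteq> B2 \<and> p' = (p - {B1, B2}) \<union> {B1 \<union> B2})"

end

(*
  A bond is determined by its partition, so the number cc of components strictly
  decreases along strict inclusions in NC_G. Conversely, below every nonempty H in NC_G lies the
  bond obtained by deleting the edges at a vertex of maximal distance from a root of a nontrivial
  component: this splits off a singleton block, keeps the partition noncrossing and raises cc by
  one. Hence the longest chains from the empty bond up to H have n - cc(H) steps, which is the
  rank formula (it holds even without gradedness).

  If every cover merges two blocks, cc drops by exactly one along covers, so every maximal chain,
  running from the empty bond to G, has n - cc(G) steps. If NC_G is graded, then all saturated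
  chains from the empty bond up to a fixed element have the same length, since replacing the lower
  part of a maximal chain keeps it maximal. For a cover H < H', extending a longest chain up to H
  by H' and comparing with a longest chain up to H' gives cc(H) = cc(H') + 1, so the cover merges
  exactly two blocks.
*)

theory Submission
  imports Defs
begin

section \<open>Saturated and maximal chains\<close>

definition saturated_chain :: "'a set set \<Rightarrow> 'a set set \<Rightarrow> 'a set \<Rightarrow> 'a set \<Rightarrow> bool" where
  "saturated_chain P C lo hi \<longleftrightarrow> is_chain P C \<and> lo \<in> C \<and> hi \<in> C \<and> (\<forall>x\<in>C. lo \<subseteq> x \<and> x \<subseteq> hi) \<and>
     (\<forall>z\<in>P. lo \<subseteq> z \<longrightarrow> z \<subseteq> hi \<longrightarrow> (\<forall>x\<in>C. x \<subseteq> z \<or> z \<subseteq> x) \<longrightarrow> z \<in> C)"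

lemma saturated_chainD:
  assumes "saturated_chain P C lo hi"
  shows "C \<subseteq> P" "x \<in> C \<Longrightarrow> y \<in> C \<Longrightarrow> x \<subseteq> y \<or> y \<subseteq> x" "lo \<in> C" "hi \<in> C"
    "x \<in> C \<Longrightarrow> lo \<subseteq> x" "x \<in> C \<Longrightarrow> x \<subseteq> hi"
    "z \<in> P \<Longrightarrow> lo \<subseteq> z \<Longrightarrow> z \<subseteq> hi \<Longrightarrow> \<forall>x\<in>C. x \<subseteq> z \<or> z \<subseteq> x \<Longrightarrow> z \<in> C"
  using assms unfolding saturated_chain_def is_chain_def by simp_all

lemma maximal_chain_iff:
  "maximal_chain P C \<longleftrightarrow> is_chain P C \<and> (\<forall>z\<in>P. (\<forall>x\<in>C. x \<subseteq> z \<or> z \<subseteq> x) \<longrightarrow> z \<in> C)"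
proof
  assume max: "maximal_chain P C"
  then have chain: "is_chain P C" unfolding maximal_chain_def by blast
  have "z \<in> C" if "z \<in> P" "\<forall>x\<in>C. x \<subseteq> z \<or> z \<subseteq> x" for z
  proof (rule ccontr)
    assume "z \<notin> C"
    moreover have "is_chain P (insert z C)" using chain that unfolding is_chain_def by blast
    ultimately show False using max unfolding maximal_chain_def by blast
  qed
  with chain show "is_chain P C \<and> (\<forall>z\<in>P. (\<forall>x\<in>C. x \<subseteq> z \<or> z \<subseteq> x) \<longrightarrow> z \<in> C)" by blast
next
  assume H: "is_chain P C \<and> (\<forall>z\<in>P. (\<forall>x\<in>C. x \<subseteq> z \<or> z \<subseteq> x) \<longrightarrow> z \<in> C)"
  show "maximal_chain P C"
    unfolding maximal_chain_def
  proof (intro conjI notI)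
    show "is_chain P C" using H by blast
    assume "\<exists>D. is_chain P D \<and> C \<subset> D"
    then obtain D z where "is_chain P D" "C \<subset> D" "z \<in> D" "z \<notin> C" by blast
    then have "z \<in> P" "\<forall>x\<in>C. x \<subseteq> z \<or> z \<subseteq> x" unfolding is_chain_def by blast+
    then show False using H \<open>z \<notin> C\<close> by blast
  qed
qed

lemma exists_maximal_chain:
  assumes "finite P" "is_chain P C"
  shows "\<exists>D. maximal_chain P D \<and> C \<subseteq> D"
proof -
  define Q where "Q = {D. is_chain P D \<and> C \<subseteq> D}"
  have "finite Q"
    using assms(1) by (rule finite_subset[rotated, OF finite_Pow_iff[THEN iffD2]])
      (auto simp: Q_def is_chain_def)
  moreover have "Q \<noteq> {}" using assms(2) unfolding Q_def by blast
  ultimately obtain D where D: "D \<in> Q" and D_max: "\<And>D'. D' \<in> Q \<Longrightarrow> D \<subseteq> D' \<Longrightarrow> D = D'"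
    using finite_has_maximal by metis
  have "maximal_chain P D"
    unfolding maximal_chain_def
  proof (intro conjI notI)
    show "is_chain P D" using D unfolding Q_def by blast
    assume "\<exists>D'. is_chain P D' \<and> D \<subset> D'"
    then obtain D' where "is_chain P D'" "D \<subset> D'" by blast
    moreover from this have "D' \<in> Q" using D unfolding Q_def by blast
    ultimately show False using D_max by blast
  qed
  then show ?thesis using D unfolding Q_def by blast
qed

lemma maximal_chain_saturated:
  assumes "maximal_chain P C" "b \<in> P" "t \<in> P" "\<forall>x\<in>P. b \<subseteq> x \<and> x \<subseteq> t"
  shows "saturated_chain P C b t"
proof -
  have "is_chain P C" and full: "\<And>z. z \<in> P \<Longrightarrow> \<forall>x\<in>C. x \<subseteq> z \<or> z \<subseteq> x \<Longrightarrow> z \<in> C"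
    using assms(1) unfolding maximal_chain_iff by blast+
  have "C \<subseteq> P" using \<open>is_chain P C\<close> unfolding is_chain_def by blast
  show ?thesis
    unfolding saturated_chain_def
  proof (intro conjI ballI impI)
    show "b \<in> C" "t \<in> C" using full assms(2-4) \<open>C \<subseteq> P\<close> by blast+
  qed (use \<open>is_chain P C\<close> full assms(4) \<open>C \<subseteq> P\<close> in blast)+
qed

lemma saturated_chain_insert_cover:
  assumes C: "saturated_chain P C lo x" and cov: "covers P x y"
  shows "saturated_chain P (insert y C) lo y"
proof -
  note S = saturated_chainD[OF C]
  have full: "z \<in> insert y C"
    if z: "z \<in> P" "lo \<subseteq> z" "z \<subseteq> y" "\<forall>w\<in>insert y C. w \<subseteq> z \<or> z \<subseteq> w" for z
  proof (cases "z \<subseteq> x")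
    case True
    then show ?thesis using S(7) z by blast
  next
    case False
    then have "x \<subset> z" using z(4) S(4) by blast
    then show ?thesis using cov z(1,3) unfolding covers_def by blast
  qed
  have "x \<subseteq> y" "y \<in> P" using cov unfolding covers_def by auto
  show ?thesis
    unfolding saturated_chain_def is_chain_def
  proof (intro conjI ballI impI)
    show "insert y C \<subseteq> P" using S(1) \<open>y \<in> P\<close> by blast
    show "w \<subseteq> w' \<or> w' \<subseteq> w" if "w \<in> insert y C" "w' \<in> insert y C" for w w'
      using that S(2,6) \<open>x \<subseteq> y\<close> by blast
    show "lo \<subseteq> w" "w \<subseteq> y" if "w \<in> insert y C" for w
      using that S(3,5,6) \<open>x \<subseteq> y\<close> by blast+
  qed (use S(3) full in simp_all)
qed

lemma saturated_chain_remove_top: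
  assumes fin: "finite P" and C: "saturated_chain P C lo hi" and ne: "hi \<noteq> lo"
  shows "\<exists>m. covers P m hi \<and> saturated_chain P (C - {hi}) lo m"
proof -
  note S = saturated_chainD[OF C]
  have "finite (C - {hi})" using S(1) fin finite_subset by blast
  moreover have "lo \<in> C - {hi}" using S(3) ne by blast
  ultimately obtain m where m: "m \<in> C - {hi}" "\<forall>x\<in>C - {hi}. m \<subseteq> x \<longrightarrow> m = x"
    using finite_has_maximal[of "C - {hi}"] by blast
  have below_m: "x \<subseteq> m" if "x \<in> C - {hi}" for x
    using m S(2)[of x m] that by blast
  have "m \<subset> hi" using m(1) S(6) by blast
  have between: "z \<in> C" if "z \<in> P" "m \<subseteq> z" "z \<subseteq> hi" for z
  proof -
    have "x \<subseteq> z \<or> z \<subseteq> x" if "x \<in> C" for x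
      using below_m[of x] that \<open>m \<subseteq> z\<close> \<open>z \<subseteq> hi\<close> by blast
    moreover have "lo \<subseteq> z" using S(5)[of m] m(1) that(2) by blast
    ultimately show ?thesis using S(7) that by blast
  qed
  have "covers P m hi"
    unfolding covers_def
  proof (intro conjI notI)
    show "m \<in> P" "hi \<in> P" using m(1) S(1,4) by blast+
    show "m \<subset> hi" by fact
    assume "\<exists>z\<in>P. m \<subset> z \<and> z \<subset> hi"
    then obtain z where "z \<in> P" "m \<subset> z" "z \<subset> hi" by blast
    then have "z \<in> C - {hi}" using between by blast
    then show False using below_m \<open>m \<subset> z\<close> by blast
  qed
  moreover have "saturated_chain P (C - {hi}) lo m"
    unfolding saturated_chain_def is_chain_def
  proof (intro conjI ballI impI)
    fix z assume z: "z \<in> P" "lo \<subseteq> z" "z \<subseteq> m" "\<forall>x\<in>C - {hi}. x \<subseteq> z \<or> z \<subseteq> x"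
    have "z \<subseteq> hi" using z(3) \<open>m \<subset> hi\<close> by blast
    moreover have "x \<subseteq> z \<or> z \<subseteq> x" if "x \<in> C" for x
      using that z(4) \<open>z \<subseteq> hi\<close> by (cases "x = hi") auto
    ultimately have "z \<in> C" using S(7) z(1,2) by blast
    then show "z \<in> C - {hi}" using \<open>z \<subseteq> m\<close> \<open>m \<subset> hi\<close> by blast
  qed (use S(1,2,3,5) below_m m(1) ne in auto)
  ultimately show ?thesis by blast
qed

lemma card_saturated_chain:
  assumes fin: "finite P" and step: "\<And>x y. covers P x y \<Longrightarrow> f y = f x + (1::nat)"
    and C: "saturated_chain P C lo hi"
  shows "card C + f lo = f hi + 1"
  using C
proof (induction "card C" arbitrary: C hi rule: less_induct)
  case less
  note S = saturated_chainD[OF less.prems]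
  show ?case
  proof (cases "hi = lo")
    case True
    then have "C = {lo}" using S(3,5,6) by blast
    then show ?thesis using True by simp
  next
    case False
    then obtain m where m: "covers P m hi" "saturated_chain P (C - {hi}) lo m"
      using saturated_chain_remove_top[OF fin less.prems] by blast
    have "finite C" using S(1) fin finite_subset by blast
    then have "card C = card (C - {hi}) + 1" using card.remove S(4) by fastforce
    moreover have "card (C - {hi}) + f lo = f m + 1" using less.hyps m(2) \<open>card C = _\<close> by simp
    ultimately show ?thesis using step[OF m(1)] by simp
  qed
qed

lemma chain_eq_saturated_Un_upper:
  assumes D: "is_chain P D" and C: "saturated_chain P C b y" "C \<subseteq> D" and bot: "\<forall>x\<in>P. b \<subseteq> x"
  shows "D = C \<union> {x\<in>D. \<not> x \<subseteq> y}"
proof (intro equalityI subsetI)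
  fix x assume "x \<in> D"
  moreover have "x \<in> C" if "x \<subseteq> y"
  proof (rule saturated_chainD(7)[OF C(1)])
    show "x \<in> P" "b \<subseteq> x" using D \<open>x \<in> D\<close> bot unfolding is_chain_def by blast+
    show "\<forall>z\<in>C. z \<subseteq> x \<or> x \<subseteq> z" using D \<open>x \<in> D\<close> C(2) unfolding is_chain_def by blast
  qed fact
  ultimately show "x \<in> C \<union> {x\<in>D. \<not> x \<subseteq> y}" by blast
qed (use C(2) in blast)

lemma maximal_chain_replace_lower_part:
  assumes D: "maximal_chain P D" "y \<in> D" and C: "saturated_chain P C b y" and bot: "\<forall>x\<in>P. b \<subseteq> x"
  shows "maximal_chain P (C \<union> {x\<in>D. \<not> x \<subseteq> y})"
proof -
  note S = saturated_chainD[OF C]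
  define D' where "D' = C \<union> {x\<in>D. \<not> x \<subseteq> y}"
  have D_chain: "D \<subseteq> P" "\<And>x z. x \<in> D \<Longrightarrow> z \<in> D \<Longrightarrow> x \<subseteq> z \<or> z \<subseteq> x"
    and D_full: "\<And>z. z \<in> P \<Longrightarrow> \<forall>x\<in>D. x \<subseteq> z \<or> z \<subseteq> x \<Longrightarrow> z \<in> D"
    using D(1) unfolding maximal_chain_iff is_chain_def by blast+
  have above_y: "y \<subseteq> x" if "x \<in> D" "\<not> x \<subseteq> y" for x
    using D_chain(2)[OF that(1) D(2)] that(2) by blast
  have chain: "is_chain P D'"
    unfolding is_chain_def
  proof (intro conjI ballI)
    show "D' \<subseteq> P" using S(1) D_chain(1) unfolding D'_def by blast
    have "x \<subseteq> z" if "x \<in> C" "z \<in> D" "\<not> z \<subseteq> y" for x z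
      using S(6)[OF that(1)] above_y[OF that(2,3)] by (rule subset_trans)
    then show "x \<subseteq> z \<or> z \<subseteq> x" if "x \<in> D'" "z \<in> D'" for x z
      using that S(2) D_chain(2) unfolding D'_def by blast
  qed
  have full: "z \<in> D'" if z: "z \<in> P" "\<forall>x\<in>D'. x \<subseteq> z \<or> z \<subseteq> x" for z
  proof (cases "z \<subseteq> y")
    case True
    moreover have "b \<subseteq> z" using bot z(1) by blast
    moreover have "\<forall>x\<in>C. x \<subseteq> z \<or> z \<subseteq> x" using z(2) unfolding D'_def by blast
    ultimately have "z \<in> C" using S(7) z(1) by blast
    then show ?thesis unfolding D'_def by blast
  next
    case False
    then have "y \<subseteq> z" using z(2) S(4) unfolding D'_def by blast
    have "x \<subseteq> z \<or> z \<subseteq> x" if "x \<in> D" for x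
    proof (cases "x \<subseteq> y")
      case True
      then show ?thesis using \<open>y \<subseteq> z\<close> by (rule subset_trans[THEN disjI1])
    next
      case False
      then show ?thesis using z(2) that unfolding D'_def by blast
    qed
    then have "z \<in> D" using D_full[OF z(1)] by blast
    then show ?thesis using False unfolding D'_def by blast
  qed
  show ?thesis
    unfolding maximal_chain_iff D'_def[symmetric] using chain full by blast
qed

lemma graded_saturated_chains_card_eq:
  assumes fin: "finite P" and gr: "graded P" and bot: "\<forall>x\<in>P. b \<subseteq> x"
    and C: "saturated_chain P C b y" and C': "saturated_chain P C' b y"
  shows "card C = card C'"
proof -
  have "is_chain P C" using C unfolding saturated_chain_def by simp
  then obtain D where D: "maximal_chain P D" "C \<subseteq> D"
    using exists_maximal_chain[OF fin] by blast
  define U where "U = {x\<in>D. \<not> x \<subseteq> y}"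
  have D_eq: "D = C \<union> U"
    using chain_eq_saturated_Un_upper[OF _ C D(2) bot] D(1) unfolding U_def maximal_chain_def by blast
  have "y \<in> D" using saturated_chainD(4)[OF C] D(2) by blast
  then have D': "maximal_chain P (C' \<union> U)"
    using maximal_chain_replace_lower_part[OF D(1) _ C' bot] unfolding U_def by blast
  have fin_chain: "finite X" if "X \<subseteq> P" for X using fin that finite_subset by blast
  have "C \<subseteq> P" "C' \<subseteq> P" "U \<subseteq> P"
    using saturated_chainD(1)[OF C] saturated_chainD(1)[OF C'] D(1)
    unfolding U_def maximal_chain_def is_chain_def by blast+
  moreover have "C \<inter> U = {}" "C' \<inter> U = {}"
    using saturated_chainD(6)[OF C] saturated_chainD(6)[OF C'] unfolding U_def by blast+
  ultimately have "card D = card C + card U" "card (C' \<union> U) = card C' + card U"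
    unfolding D_eq by (simp_all add: card_Un_disjoint fin_chain)
  moreover have "card D = card (C' \<union> U)" using gr D(1) D' unfolding graded_def by blast
  ultimately show ?thesis by simp
qed

lemma card_chain_le_if_strict_antimono:
  fixes f :: "'a set \<Rightarrow> nat"
  assumes C: "is_chain P C" and anti: "\<And>x y. x \<in> P \<Longrightarrow> y \<in> P \<Longrightarrow> x \<subset> y \<Longrightarrow> f y < f x"
    and range: "f ` C \<subseteq> {a..b}"
  shows "card C \<le> Suc b - a"
proof -
  have "inj_on f C"
  proof (rule inj_onI)
    fix x y assume "x \<in> C" "y \<in> C" "f x = f y"
    show "x = y"
    proof (rule ccontr)
      assume "x \<noteq> y"
      moreover have "x \<in> P" "y \<in> P" "x \<subseteq> y \<or> y \<subseteq> x"
        using C \<open>x \<in> C\<close> \<open>y \<in> C\<close> unfolding is_chain_def by blast+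
      ultimately have "f y < f x \<or> f x < f y" using anti by blast
      then show False using \<open>f x = f y\<close> by simp
    qed
  qed
  then have "card C \<le> card {a..b}" using card_inj_on_le range by blast
  then show ?thesis by simp
qed

section \<open>Set partitions given by block maps\<close>

(* c v is the block containing v of the set partition c ` S of S. *)
definition block_map :: "'a set \<Rightarrow> ('a \<Rightarrow> 'a set) \<Rightarrow> bool" where
  "block_map S c \<longleftrightarrow> (\<forall>v\<in>S. c v = {x\<in>S. c x = c v})"

lemma block_map_mem_iff: "block_map S c \<Longrightarrow> v \<in> S \<Longrightarrow> x \<in> S \<Longrightarrow> x \<in> c v \<longleftrightarrow> c x = c v"
  unfolding block_map_def by blast

lemma block_map_self: "block_map S c \<Longrightarrow> v \<in> S \<Longrightarrow> v \<in> c v"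
  unfolding block_map_def by blast

lemma block_map_subset: "block_map S c \<Longrightarrow> v \<in> S \<Longrightarrow> c v \<subseteq> S"
  unfolding block_map_def by blast

lemma block_map_coarser_eq:
  assumes c: "block_map S c" and c': "block_map S c'" and coarser: "\<forall>v\<in>S. c v \<subseteq> c' v"
    and "u \<in> S" "v \<in> S" "c u = c v"
  shows "c' u = c' v"
proof -
  have "u \<in> c' v" using block_map_self[OF c \<open>u \<in> S\<close>] \<open>c u = c v\<close> coarser \<open>v \<in> S\<close> by blast
  then show ?thesis using block_map_mem_iff[OF c' \<open>v \<in> S\<close> \<open>u \<in> S\<close>] by simp
qed

lemma card_image_coarser:
  assumes fin: "finite S" and c: "block_map S c" and c': "block_map S c'"
    and coarser: "\<forall>v\<in>S. c v \<subseteq> c' v"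
  shows "card (c' ` S) \<le> card (c ` S)"
    and "card (c' ` S) = card (c ` S) \<longleftrightarrow> (\<forall>u\<in>S. \<forall>v\<in>S. c' u = c' v \<longrightarrow> c u = c v)"
proof -
  define k where "k B = c' (SOME v. v \<in> S \<and> c v = B)" for B
  have k: "k (c v) = c' v" if "v \<in> S" for v
  proof -
    have "\<exists>w. w \<in> S \<and> c w = c v" using that by blast
    then have "(SOME w. w \<in> S \<and> c w = c v) \<in> S \<and> c (SOME w. w \<in> S \<and> c w = c v) = c v"
      by (rule someI_ex)
    then show ?thesis unfolding k_def using block_map_coarser_eq[OF c c' coarser _ that] by blast
  qed
  then have image: "c' ` S = k ` c ` S" by (auto simp: image_iff)
  show "card (c' ` S) \<le> card (c ` S)" unfolding image using fin by (simp add: card_image_le)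
  have "inj_on k (c ` S) \<longleftrightarrow> (\<forall>u\<in>S. \<forall>v\<in>S. c' u = c' v \<longrightarrow> c u = c v)"
    unfolding inj_on_def using k by auto
  moreover have "card (k ` c ` S) = card (c ` S) \<longleftrightarrow> inj_on k (c ` S)"
    using fin eq_card_imp_inj_on card_image by blast
  ultimately show "card (c' ` S) = card (c ` S) \<longleftrightarrow> (\<forall>u\<in>S. \<forall>v\<in>S. c' u = c' v \<longrightarrow> c u = c v)"
    unfolding image by simp
qed

lemma block_map_eq_if_card_image_eq:
  assumes fin: "finite S" and c: "block_map S c" and c': "block_map S c'"
    and coarser: "\<forall>v\<in>S. c v \<subseteq> c' v" and card: "card (c' ` S) = card (c ` S)" and "v \<in> S"
  shows "c' v = c v"
proof -
  have "c' x = c' v \<longleftrightarrow> c x = c v" if "x \<in> S" for x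
    using card_image_coarser(2)[OF fin c c' coarser] card block_map_coarser_eq[OF c c' coarser]
      that \<open>v \<in> S\<close> by blast
  then show ?thesis
    using c c' \<open>v \<in> S\<close> unfolding block_map_def by blast
qed

lemma union_blocks_notin_image:
  assumes c: "block_map S c" and "u \<in> S" "w \<in> S" "c u \<noteq> c w"
  shows "c u \<union> c w \<notin> c ` S"
proof
  assume "c u \<union> c w \<in> c ` S"
  then obtain x where "x \<in> S" "c u \<union> c w = c x" by blast
  then have "c u = c x" "c w = c x"
    using block_map_self[OF c] block_map_mem_iff[OF c] \<open>u \<in> S\<close> \<open>w \<in> S\<close> by blast+
  then show False using \<open>c u \<noteq> c w\<close> by simp
qed

lemma card_merge_two_blocks:
  assumes fin: "finite S" and c: "block_map S c" and "u \<in> S" "w \<in> S" "c u \<noteq> c w"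
  shows "card ((c ` S - {c u, c w}) \<union> {c u \<union> c w}) + 1 = card (c ` S)"
proof -
  have "{c u, c w} \<subseteq> c ` S" using assms(3,4) by blast
  moreover have "card {c u, c w} = 2" using \<open>c u \<noteq> c w\<close> by simp
  ultimately have "card (c ` S - {c u, c w}) + 2 = card (c ` S)"
    using fin by (metis card_Diff_subset card_mono finite_imageI le_add_diff_inverse2 finite_subset)
  moreover have "c u \<union> c w \<notin> c ` S - {c u, c w}"
    using union_blocks_notin_image[OF assms(2-5)] by blast
  ultimately show ?thesis using fin by simp
qed

definition merge_blocks :: "('a \<Rightarrow> 'a set) \<Rightarrow> 'a set \<Rightarrow> 'a set \<Rightarrow> 'a \<Rightarrow> 'a set" where
  "merge_blocks c B1 B2 x = (if c x = B1 \<or> c x = B2 then B1 \<union> B2 else c x)"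

lemma block_map_merge_blocks:
  assumes c: "block_map S c" and u: "u \<in> S" and w: "w \<in> S" and ne: "c u \<noteq> c w"
  shows "block_map S (merge_blocks c (c u) (c w))"
proof -
  let ?m = "merge_blocks c (c u) (c w)"
  have not_block: "c x \<noteq> c u \<union> c w" if "x \<in> S" for x
    using union_blocks_notin_image[OF c u w ne] that by blast
  have union: "c u \<union> c w = {x\<in>S. c x = c u \<or> c x = c w}"
    using c u w unfolding block_map_def by blast
  show "block_map S ?m"
    unfolding block_map_def
  proof
    fix v assume "v \<in> S"
    show "?m v = {x\<in>S. ?m x = ?m v}"
    proof (cases "c v = c u \<or> c v = c w")
      case True
      have "?m x = ?m v \<longleftrightarrow> c x = c u \<or> c x = c w" if "x \<in> S" for x
        using True not_block[OF that] unfolding merge_blocks_def by auto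
      then have "{x\<in>S. ?m x = ?m v} = c u \<union> c w" unfolding union by blast
      then show ?thesis using True unfolding merge_blocks_def by simp
    next
      case False
      have "?m x = ?m v \<longleftrightarrow> c x = c v" if "x \<in> S" for x
        using False not_block[OF that] not_block[OF \<open>v \<in> S\<close>] unfolding merge_blocks_def by auto
      then have "{x\<in>S. ?m x = ?m v} = {x\<in>S. c x = c v}" by blast
      then show ?thesis
        using False c \<open>v \<in> S\<close> unfolding merge_blocks_def block_map_def by simp
    qed
  qed
qed

lemma merge_blocks_image:
  assumes u: "u \<in> S"
  shows "merge_blocks c (c u) (c w) ` S = (c ` S - {c u, c w}) \<union> {c u \<union> c w}"
proof (intro equalityI subsetI)
  fix B assume "B \<in> merge_blocks c (c u) (c w) ` S"
  then obtain x where "x \<in> S" "B = merge_blocks c (c u) (c w) x" by blast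
  then show "B \<in> (c ` S - {c u, c w}) \<union> {c u \<union> c w}"
    unfolding merge_blocks_def by (simp split: if_splits)
next
  fix B assume "B \<in> (c ` S - {c u, c w}) \<union> {c u \<union> c w}"
  then consider "B = merge_blocks c (c u) (c w) u" | x where "x \<in> S" "B = merge_blocks c (c u) (c w) x"
    unfolding merge_blocks_def by (metis Diff_iff Un_iff image_iff insertCI singletonD)
  then show "B \<in> merge_blocks c (c u) (c w) ` S" using u by cases blast+
qed

lemma merges_two_blocks_iff_card:
  assumes fin: "finite S" and c: "block_map S c" and c': "block_map S c'"
    and coarser: "\<forall>v\<in>S. c v \<subseteq> c' v"
  shows "merges_two_blocks (c ` S) (c' ` S) \<longleftrightarrow> card (c ` S) = card (c' ` S) + 1"
proof
  assume "merges_two_blocks (c ` S) (c' ` S)"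
  then obtain B1 B2 where "B1 \<in> c ` S" "B2 \<in> c ` S" "B1 \<noteq> B2"
    and merged: "c' ` S = (c ` S - {B1, B2}) \<union> {B1 \<union> B2}"
    unfolding merges_two_blocks_def by (elim bexE conjE)
  then obtain u w where "u \<in> S" "w \<in> S" "B1 = c u" "B2 = c w" by blast
  then show "card (c ` S) = card (c' ` S) + 1"
    using card_merge_two_blocks[OF fin c] merged \<open>B1 \<noteq> B2\<close> by simp
next
  assume card: "card (c ` S) = card (c' ` S) + 1"
  then obtain u w where uw: "u \<in> S" "w \<in> S" "c' u = c' w" "c u \<noteq> c w"
    using card_image_coarser(2)[OF fin c c' coarser] by auto
  let ?m = "merge_blocks c (c u) (c w)"
  note m = block_map_merge_blocks[OF c uw(1,2,4)] merge_blocks_image[OF uw(1)]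
  have m_coarser: "\<forall>v\<in>S. ?m v \<subseteq> c' v"
  proof
    fix v assume "v \<in> S"
    show "?m v \<subseteq> c' v"
    proof (cases "c v = c u \<or> c v = c w")
      case True
      then have "c' v = c' u"
        using block_map_coarser_eq[OF c c' coarser] \<open>v \<in> S\<close> uw by metis
      then show ?thesis
        using True coarser uw unfolding merge_blocks_def by auto
    next
      case False
      then show ?thesis using coarser \<open>v \<in> S\<close> unfolding merge_blocks_def by simp
    qed
  qed
  have "card (c' ` S) = card (?m ` S)"
    using card card_merge_two_blocks[OF fin c uw(1,2,4)] unfolding m(2) by simp
  then have "c' ` S = ?m ` S"
    using block_map_eq_if_card_image_eq[OF fin m(1) c' m_coarser] by (auto simp: image_iff)
  then show "merges_two_blocks (c ` S) (c' ` S)"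
    unfolding merges_two_blocks_def m(2) using uw by blast
qed

lemma crossingI:
  assumes "B \<in> P" "B' \<in> P" "B \<noteq> B'" "a \<in> B" "c \<in> B" "b \<in> B'" "d \<in> B'" "a < b" "b < c" "c < d"
  shows "crossing P"
  unfolding crossing_def
  by (intro bexI[OF _ assms(1)] bexI[OF _ assms(2)] conjI exI[of _ a] exI[of _ b] exI[of _ c] exI[of _ d])
    (fact assms)+

lemma noncrossing_split_off_singletons:
  assumes c: "block_map S c" and c': "block_map S c'" and finer: "\<forall>v\<in>S. c' v \<subseteq> c v"
    and split: "\<And>u w. u \<in> S \<Longrightarrow> w \<in> S \<Longrightarrow> c u = c w \<Longrightarrow> c' u = c' w \<or> c' u = {u} \<or> c' w = {w}"
    and nc: "noncrossing (c ` S)"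
  shows "noncrossing (c' ` S)"
  unfolding noncrossing_def
proof
  assume "crossing (c' ` S)"
  then obtain X Y i j k l where XY: "X \<in> c' ` S" "Y \<in> c' ` S" "X \<noteq> Y"
    and mem: "i \<in> X" "k \<in> X" "j \<in> Y" "l \<in> Y" and order: "i < j" "j < k" "k < l"
    unfolding crossing_def by blast
  have S: "i \<in> S" "j \<in> S" "k \<in> S" "l \<in> S"
    using XY mem block_map_subset[OF c'] by blast+
  have X: "c' i = X" "c' k = X" and Y: "c' j = Y" "c' l = Y"
    using XY mem S block_map_mem_iff[OF c'] by blast+
  have "c' i \<noteq> {i}" "c' j \<noteq> {j}" using X Y mem order by auto
  then have "c i \<noteq> c j" using split[OF S(1,2)] X(1) Y(1) XY(3) by blast
  moreover have "i \<in> c i" "k \<in> c i" "j \<in> c j" "l \<in> c j"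
    using X Y mem finer S by blast+
  ultimately have "crossing (c ` S)"
    using S(1,2) order by (intro crossingI[of "c i" _ "c j" i k j l]) simp_all
  then show False using nc unfolding noncrossing_def by blast
qed

section \<open>Components and bonds\<close>

lemma rtrancl_Un_converse_sym: "(a, b) \<in> (H \<union> H\<inverse>)\<^sup>* \<Longrightarrow> (b, a) \<in> (H \<union> H\<inverse>)\<^sup>*"
  by (metis sym_Un_converse sym_rtrancl symD)

lemma component_block_map: "block_map {1..n} (component n H)"
  unfolding block_map_def
proof
  fix v :: nat assume "v \<in> {1..n}"
  have same: "component n H x = component n H v" if "(v, x) \<in> (H \<union> H\<inverse>)\<^sup>*" for x
    using that rtrancl_Un_converse_sym[OF that] unfolding component_def
    by (blast intro: rtrancl_trans)
  show "component n H v = {x \<in> {1..n}. component n H x = component n H v}"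
  proof (intro equalityI subsetI)
    fix x assume "x \<in> component n H v"
    then show "x \<in> {x \<in> {1..n}. component n H x = component n H v}"
      using same unfolding component_def by blast
  next
    fix x assume "x \<in> {x \<in> {1..n}. component n H x = component n H v}"
    moreover have "x \<in> component n H x" if "x \<in> {1..n}" for x
      using that unfolding component_def by simp
    ultimately show "x \<in> component n H v" by force
  qed
qed

lemma component_mono: "H \<subseteq> H' \<Longrightarrow> component n H v \<subseteq> component n H' v"
  unfolding component_def using rtrancl_mono[of "H \<union> H\<inverse>" "H' \<union> H'\<inverse>"] by blast

lemma cc_le: "cc n H \<le> n"
  unfolding cc_def comp_partition_def using card_image_le[of "{1..n}" "component n H"] by simp

lemma simple_graph_edgeD: "simple_graph n G \<Longrightarrow> (i, j) \<in> G \<Longrightarrow> i \<in> {1..n} \<and> j \<in> {1..n} \<and> i < j"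
  unfolding simple_graph_def by auto

lemma bond_edge_iff:
  assumes G: "simple_graph n G" and H: "is_bond n G H"
  shows "(i, j) \<in> H \<longleftrightarrow> (i, j) \<in> G \<and> component n H i = component n H j"
proof
  assume ij: "(i, j) \<in> H"
  then have "(i, j) \<in> G" using H unfolding is_bond_def by blast
  moreover from this have "i \<in> {1..n}" "j \<in> {1..n}" using simple_graph_edgeD[OF G] by auto
  moreover from this have "j \<in> component n H i" using ij unfolding component_def by blast
  ultimately show "(i, j) \<in> G \<and> component n H i = component n H j"
    using block_map_mem_iff[OF component_block_map] by metis
next
  assume ij: "(i, j) \<in> G \<and> component n H i = component n H j"
  then have "i \<in> {1..n}" "j \<in> {1..n}" using simple_graph_edgeD[OF G] by auto
  then have "component n H i \<in> comp_partition n H" "i \<in> component n H i" "j \<in> component n H i"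
    using block_map_self[OF component_block_map] ij unfolding comp_partition_def by auto
  then show "(i, j) \<in> H" using ij H unfolding is_bond_def by blast
qed

lemma is_bond_subset:
  assumes G: "simple_graph n G" and H: "is_bond n G H" and "H' \<subseteq> H"
    and separated: "\<And>i j. (i, j) \<in> H - H' \<Longrightarrow> component n H' i \<noteq> component n H' j"
  shows "is_bond n G H'"
  unfolding is_bond_def
proof (intro conjI ballI allI impI)
  show "H' \<subseteq> G" using H \<open>H' \<subseteq> H\<close> unfolding is_bond_def by blast
  fix B i j assume "B \<in> comp_partition n H'" and ij: "(i, j) \<in> G \<and> i \<in> B \<and> j \<in> B"
  then obtain x where "x \<in> {1..n}" "B = component n H' x" unfolding comp_partition_def by blast
  moreover have "i \<in> {1..n}" "j \<in> {1..n}" using ij simple_graph_edgeD[OF G] by auto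
  ultimately have same': "component n H' i = component n H' j"
    using ij block_map_mem_iff[OF component_block_map] by metis
  then have "j \<in> component n H i"
    using block_map_self[OF component_block_map \<open>j \<in> {1..n}\<close>] component_mono[OF \<open>H' \<subseteq> H\<close>]
    by blast
  then have "component n H i = component n H j"
    using block_map_mem_iff[OF component_block_map \<open>i \<in> {1..n}\<close> \<open>j \<in> {1..n}\<close>] by simp
  then have "(i, j) \<in> H" using bond_edge_iff[OF G H] ij by blast
  then show "(i, j) \<in> H'" using separated same' by blast
qed

lemma NC_subset_graph: "H \<in> NC n G \<Longrightarrow> H \<subseteq> G"
  unfolding NC_def noncrossing_bond_def is_bond_def by blast

lemma finite_simple_graph: "simple_graph n G \<Longrightarrow> finite G"
  unfolding simple_graph_def by (rule finite_subset[of _ "{1..n} \<times> {1..n}"]) auto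

lemma finite_NC: "simple_graph n G \<Longrightarrow> finite (NC n G)"
  using NC_subset_graph finite_simple_graph by (metis Pow_iff finite_Pow_iff finite_subset subsetI)

lemma comp_partition_empty: "comp_partition n {} = (\<lambda>v. {v}) ` {1..n}"
  unfolding comp_partition_def component_def by (auto simp: image_iff)

lemma cc_empty: "cc n {} = n"
  unfolding cc_def comp_partition_empty by (simp add: card_image)

lemma empty_in_NC:
  assumes "simple_graph n G"
  shows "{} \<in> NC n G"
proof -
  have "is_bond n G {}"
    unfolding is_bond_def comp_partition_empty using simple_graph_edgeD[OF assms] by fastforce
  moreover have "noncrossing (comp_partition n {})"
    unfolding noncrossing_def crossing_def comp_partition_empty by auto
  ultimately show ?thesis unfolding NC_def noncrossing_bond_def by simp
qed

lemma cc_strict_antimono: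
  assumes G: "simple_graph n G" and H: "H \<in> NC n G" and H': "H' \<in> NC n G" and "H \<subset> H'"
  shows "cc n H' < cc n H"
proof -
  have coarser: "\<forall>v\<in>{1..n}. component n H v \<subseteq> component n H' v"
    using component_mono \<open>H \<subset> H'\<close> by blast
  note card = card_image_coarser[OF finite_atLeastAtMost component_block_map component_block_map coarser]
  have "cc n H' \<noteq> cc n H"
  proof
    assume "cc n H' = cc n H"
    then have same: "component n H i = component n H j"
      if "i \<in> {1..n}" "j \<in> {1..n}" "component n H' i = component n H' j" for i j
      using card(2) that unfolding cc_def comp_partition_def by blast
    have "H' \<subseteq> H" \<comment> \<open>a bond is determined by its partition\<close>
    proof
      fix e assume "e \<in> H'"
      then obtain i j where "e = (i, j)" "(i, j) \<in> G" "component n H' i = component n H' j"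
        using bond_edge_iff[OF G] H' unfolding NC_def noncrossing_bond_def by (metis surj_pair mem_Collect_eq)
      then show "e \<in> H"
        using same simple_graph_edgeD[OF G] bond_edge_iff[OF G] H
        unfolding NC_def noncrossing_bond_def by auto
    qed
    then show False using \<open>H \<subset> H'\<close> by blast
  qed
  moreover have "cc n H' \<le> cc n H" using card(1) unfolding cc_def comp_partition_def .
  ultimately show ?thesis by simp
qed

lemma merges_two_blocks_iff_cc:
  assumes "H \<subseteq> H'"
  shows "merges_two_blocks (comp_partition n H) (comp_partition n H') \<longleftrightarrow> cc n H = cc n H' + 1"
  unfolding cc_def comp_partition_def
  using assms component_mono
  by (intro merges_two_blocks_iff_card[OF finite_atLeastAtMost component_block_map component_block_map])
    blast

section \<open>Isolating a non-cut vertex\<close>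

definition isolate_vertex :: "'a \<Rightarrow> ('a \<times> 'a) set \<Rightarrow> ('a \<times> 'a) set" where
  "isolate_vertex v R = {(x, y) \<in> R. x \<noteq> v \<and> y \<noteq> v}"

lemma isolate_vertex_subset: "isolate_vertex v R \<subseteq> R"
  unfolding isolate_vertex_def by blast

lemma isolate_vertex_Un_converse:
  "isolate_vertex v (H \<union> H\<inverse>) = isolate_vertex v H \<union> (isolate_vertex v H)\<inverse>"
  unfolding isolate_vertex_def by blast

lemma rtrancl_isolate_vertexD:
  "(x, y) \<in> (isolate_vertex v R)\<^sup>* \<Longrightarrow> x = y \<or> x \<noteq> v \<and> y \<noteq> v"
  by (induction rule: rtrancl_induct) (auto simp: isolate_vertex_def)

lemma rtrancl_isolate_vertexI:
  assumes "(x, y) \<in> R\<^sup>*" and avoids: "\<forall>z. (x, z) \<in> R\<^sup>* \<longrightarrow> z \<noteq> v"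
  shows "(x, y) \<in> (isolate_vertex v R)\<^sup>*"
  using assms(1)
proof (induction rule: rtrancl_induct)
  case (step y z)
  then have "(y, z) \<in> isolate_vertex v R"
    using avoids rtrancl_into_rtrancl[OF step.hyps(1,2)] unfolding isolate_vertex_def by blast
  then show ?case using step.IH by (rule rtrancl_into_rtrancl[rotated])
qed simp

(* A vertex at maximal distance from r is not a cut vertex. *)
lemma exists_non_cut_vertex:
  assumes fin: "finite {u. (r, u) \<in> R\<^sup>*}" and "(r, s) \<in> R\<^sup>*" "s \<noteq> r"
  obtains v where "(r, v) \<in> R\<^sup>*" "v \<noteq> r"
    "\<And>u. (r, u) \<in> R\<^sup>* \<Longrightarrow> u \<noteq> v \<Longrightarrow> (r, u) \<in> (isolate_vertex v R)\<^sup>*"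
proof -
  define B where "B = {u. (r, u) \<in> R\<^sup>*}"
  define d where "d u = (LEAST k. (r, u) \<in> R ^^ k)" for u
  have d: "(r, u) \<in> R ^^ d u" if "u \<in> B" for u
  proof -
    have "\<exists>k. (r, u) \<in> R ^^ k" using that rtrancl_power unfolding B_def by blast
    then show ?thesis unfolding d_def by (rule LeastI_ex)
  qed
  have d_le: "d u \<le> k" if "(r, u) \<in> R ^^ k" for u k
    unfolding d_def using that by (rule Least_le)
  have "s \<in> B" using assms(2) unfolding B_def by blast
  then obtain v where v: "v \<in> B" "\<And>u. u \<in> B \<Longrightarrow> d u \<le> d v"
    using fin Max_ge Max_in[of "d ` B"] unfolding B_def[symmetric] by (metis empty_iff finite_imageI imageE image_eqI)
  have "d s \<noteq> 0" using d[OF \<open>s \<in> B\<close>] \<open>s \<noteq> r\<close> by (metis relpow_0_E)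
  moreover have "d r = 0" using d_le[of r 0] by simp
  ultimately have "v \<noteq> r" using v(2)[OF \<open>s \<in> B\<close>] by auto
  have "(r, u) \<in> (isolate_vertex v R)\<^sup>*" if "u \<in> B" "u \<noteq> v" for u
    using that
  proof (induction "d u" arbitrary: u rule: less_induct)
    case less
    show ?case
    proof (cases "d u")
      case 0
      then show ?thesis using d[OF less.prems(1)] by simp
    next
      case (Suc k)
      then obtain w where w: "(r, w) \<in> R ^^ k" "(w, u) \<in> R"
        using d[OF less.prems(1)] by (metis relpow_Suc_E)
      then have "w \<in> B" unfolding B_def using relpow_imp_rtrancl by blast
      have "d w < d u" using d_le[OF w(1)] Suc by simp
      then have "w \<noteq> v" using v(2)[OF less.prems(1)] by auto
      then have "(w, u) \<in> isolate_vertex v R" using w(2) less.prems(2) unfolding isolate_vertex_def by blast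
      moreover have "(r, w) \<in> (isolate_vertex v R)\<^sup>*" using less.hyps[OF \<open>d w < d u\<close> \<open>w \<in> B\<close> \<open>w \<noteq> v\<close>] .
      ultimately show ?thesis by (rule rtrancl_into_rtrancl[rotated])
    qed
  qed
  then show ?thesis using that v(1) \<open>v \<noteq> r\<close> unfolding B_def by blast
qed

context
  fixes n :: nat and H :: "(nat \<times> nat) set" and r v :: nat
  assumes r: "r \<in> {1..n}" and v: "v \<in> component n H r" "v \<noteq> r"
    and non_cut: "\<And>u. u \<in> component n H r \<Longrightarrow> u \<noteq> v \<Longrightarrow> (r, u) \<in> (isolate_vertex v (H \<union> H\<inverse>))\<^sup>*"
begin

lemma component_isolate_vertex:
  assumes "x \<in> {1..n}"
  shows "component n (isolate_vertex v H) x =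
    (if x = v then {v} else if x \<in> component n H r then component n H r - {v} else component n H x)"
proof -
  let ?H' = "isolate_vertex v H" and ?R = "H \<union> H\<inverse>"
  have R': "?H' \<union> ?H'\<inverse> = isolate_vertex v ?R" by (rule isolate_vertex_Un_converse[symmetric])
  have comp': "component n ?H' y = {u \<in> {1..n}. (y, u) \<in> (isolate_vertex v ?R)\<^sup>*}" for y
    unfolding component_def R' ..
  have "v \<in> {1..n}" using v(1) unfolding component_def by blast
  consider "x = v" | "x \<noteq> v" "x \<in> component n H r" | "x \<notin> component n H r" using v(1) by blast
  then show ?thesis
  proof cases
    case 1
    then show ?thesis
      using \<open>v \<in> {1..n}\<close> rtrancl_isolate_vertexD[of v _ v ?R] unfolding comp' by auto
  next
    case 2
    have "component n ?H' x = component n H r - {v}"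
    proof (intro equalityI subsetI)
      fix u assume "u \<in> component n ?H' x"
      then have u: "u \<in> {1..n}" "(x, u) \<in> (isolate_vertex v ?R)\<^sup>*" unfolding comp' by simp_all
      then have "(x, u) \<in> ?R\<^sup>*" using rtrancl_mono[OF isolate_vertex_subset[of v ?R]] by blast
      moreover have "(r, x) \<in> ?R\<^sup>*" using 2(2) unfolding component_def by blast
      ultimately have "u \<in> component n H r"
        using u(1) unfolding component_def by (blast intro: rtrancl_trans)
      moreover have "u \<noteq> v" using rtrancl_isolate_vertexD[OF u(2)] 2(1) by blast
      ultimately show "u \<in> component n H r - {v}" by blast
    next
      fix u assume u: "u \<in> component n H r - {v}"
      have "(x, r) \<in> (isolate_vertex v ?R)\<^sup>*"
        using non_cut[OF 2(2) 2(1)] unfolding R'[symmetric] by (rule rtrancl_Un_converse_sym)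
      then have "(x, u) \<in> (isolate_vertex v ?R)\<^sup>*"
        using non_cut u by (blast intro: rtrancl_trans)
      then show "u \<in> component n ?H' x" unfolding comp' using u unfolding component_def by blast
    qed
    then show ?thesis using 2 by simp
  next
    case 3
    have "x \<noteq> v" using 3 v(1) by blast
    have avoids: "\<forall>z. (x, z) \<in> ?R\<^sup>* \<longrightarrow> z \<noteq> v"
    proof (intro allI impI notI)
      fix z assume "(x, z) \<in> ?R\<^sup>*" "z = v"
      then have "(v, x) \<in> ?R\<^sup>*" by (simp add: rtrancl_Un_converse_sym)
      moreover have "(r, v) \<in> ?R\<^sup>*" using v(1) unfolding component_def by blast
      ultimately have "(r, x) \<in> ?R\<^sup>*" by (rule rtrancl_trans[rotated])
      then show False using 3 assms unfolding component_def by blast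
    qed
    have "(x, u) \<in> (isolate_vertex v ?R)\<^sup>* \<longleftrightarrow> (x, u) \<in> ?R\<^sup>*" for u
      using rtrancl_isolate_vertexI[OF _ avoids] rtrancl_mono[OF isolate_vertex_subset[of v ?R]]
      by blast
    then have "component n ?H' x = component n H x"
      unfolding comp' unfolding component_def by simp
    then show ?thesis using 3 \<open>x \<noteq> v\<close> by simp
  qed
qed


lemma merges_two_blocks_isolate_vertex:
  "merges_two_blocks (comp_partition n (isolate_vertex v H)) (comp_partition n H)"
proof -
  let ?c = "component n H" and ?c' = "component n (isolate_vertex v H)" and ?B = "component n H r"
  have "v \<in> {1..n}" using v(1) unfolding component_def by blast
  have in_B: "x \<in> ?B \<longleftrightarrow> ?c x = ?B" if "x \<in> {1..n}" for x
    using block_map_mem_iff[OF component_block_map r that] .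
  have "r \<in> ?B" by (rule block_map_self[OF component_block_map r])
  have "?c' v = {v}" "?c' r = ?B - {v}"
    using component_isolate_vertex \<open>v \<in> {1..n}\<close> r v(2) \<open>r \<in> ?B\<close> by simp_all
  then have blocks: "{v} \<in> comp_partition n (isolate_vertex v H)" "?B - {v} \<in> comp_partition n (isolate_vertex v H)"
    using \<open>v \<in> {1..n}\<close> r unfolding comp_partition_def by (metis imageI)+
  have "{v} \<noteq> ?B - {v}" by blast
  have merged: "comp_partition n H =
      (comp_partition n (isolate_vertex v H) - {{v}, ?B - {v}}) \<union> {{v} \<union> (?B - {v})}"
  proof (intro equalityI subsetI)
    fix X assume "X \<in> comp_partition n H"
    then obtain x where x: "x \<in> {1..n}" "X = ?c x" unfolding comp_partition_def by blast
    show "X \<in> (comp_partition n (isolate_vertex v H) - {{v}, ?B - {v}}) \<union> {{v} \<union> (?B - {v})}"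
    proof (cases "x \<in> ?B")
      case True
      then show ?thesis using x in_B v(1) by blast
    next
      case False
      then have "X = ?c' x" "x \<noteq> v" using x component_isolate_vertex v(1) by auto
      moreover have "x \<in> X" using x block_map_self[OF component_block_map] by blast
      ultimately show ?thesis using x(1) False unfolding comp_partition_def by blast
    qed
  next
    fix X assume X: "X \<in> (comp_partition n (isolate_vertex v H) - {{v}, ?B - {v}}) \<union> {{v} \<union> (?B - {v})}"
    show "X \<in> comp_partition n H"
    proof (cases "X = {v} \<union> (?B - {v})")
      case True
      then have "X = ?c r" using v(1) by blast
      then show ?thesis using r unfolding comp_partition_def by blast
    next
      case False
      then obtain x where "x \<in> {1..n}" "X = ?c' x" "X \<noteq> {v}" "X \<noteq> ?B - {v}"
        using X unfolding comp_partition_def by blast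
      then have "X = ?c x" using component_isolate_vertex by (auto split: if_splits)
      then show ?thesis using \<open>x \<in> {1..n}\<close> unfolding comp_partition_def by blast
    qed
  qed
  show ?thesis
    unfolding merges_two_blocks_def
    by (intro bexI[OF _ blocks(1)] bexI[OF _ blocks(2)] conjI) (fact \<open>{v} \<noteq> ?B - {v}\<close> merged)+
qed

lemma noncrossing_isolate_vertex:
  assumes "noncrossing (comp_partition n H)"
  shows "noncrossing (comp_partition n (isolate_vertex v H))"
  unfolding comp_partition_def
proof (rule noncrossing_split_off_singletons[OF component_block_map component_block_map])
  show "\<forall>u\<in>{1..n}. component n (isolate_vertex v H) u \<subseteq> component n H u"
    using component_mono[OF isolate_vertex_subset] by blast
  show "noncrossing (component n H ` {1..n})" using assms unfolding comp_partition_def .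
  fix u w assume uw: "u \<in> {1..n}" "w \<in> {1..n}" "component n H u = component n H w"
  have "u \<in> component n H r \<longleftrightarrow> w \<in> component n H r"
    using uw block_map_mem_iff[OF component_block_map r] by simp
  then show "component n (isolate_vertex v H) u = component n (isolate_vertex v H) w \<or>
      component n (isolate_vertex v H) u = {u} \<or> component n (isolate_vertex v H) w = {w}"
    using uw component_isolate_vertex by simp
qed

lemma is_bond_isolate_vertex:
  assumes G: "simple_graph n G" and H: "is_bond n G H"
  shows "is_bond n G (isolate_vertex v H)"
proof (rule is_bond_subset[OF G H isolate_vertex_subset])
  fix i j assume ij: "(i, j) \<in> H - isolate_vertex v H"
  then have "i = v \<or> j = v" unfolding isolate_vertex_def by blast
  moreover have "i \<in> {1..n}" "j \<in> {1..n}" "i \<noteq> j"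
    using ij H simple_graph_edgeD[OF G] unfolding is_bond_def by fastforce+
  moreover have "x \<in> component n (isolate_vertex v H) x" if "x \<in> {1..n}" for x
    using block_map_self[OF component_block_map that] .
  ultimately show "component n (isolate_vertex v H) i \<noteq> component n (isolate_vertex v H) j"
    using component_isolate_vertex by (metis singletonD)
qed

end

lemma rtrancl_sym_closure_in_vertices:
  assumes G: "simple_graph n G" and "H \<subseteq> G" and "r \<in> {1..n}" and "(r, u) \<in> (H \<union> H\<inverse>)\<^sup>*"
  shows "u \<in> {1..n}"
  using assms(4,3)
proof (induction rule: rtrancl_induct)
  case (step y z)
  then show ?case using \<open>H \<subseteq> G\<close> simple_graph_edgeD[OF G] by blast
qed

lemma exists_non_cut_vertex_component:
  assumes G: "simple_graph n G" and "H \<subseteq> G" and "(r, s) \<in> H"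
  obtains v where "r \<in> {1..n}" "v \<in> component n H r" "v \<noteq> r"
    "\<And>u. u \<in> component n H r \<Longrightarrow> u \<noteq> v \<Longrightarrow> (r, u) \<in> (isolate_vertex v (H \<union> H\<inverse>))\<^sup>*"
proof -
  let ?R = "H \<union> H\<inverse>"
  have "(r, s) \<in> G" using \<open>H \<subseteq> G\<close> \<open>(r, s) \<in> H\<close> by blast
  then have r: "r \<in> {1..n}" "r \<noteq> s" using simple_graph_edgeD[OF G] by auto
  have reach: "u \<in> {1..n}" if "(r, u) \<in> ?R\<^sup>*" for u
    using rtrancl_sym_closure_in_vertices[OF G \<open>H \<subseteq> G\<close> r(1) that] .
  then have "{u. (r, u) \<in> ?R\<^sup>*} \<subseteq> {1..n}" by blast
  then have "finite {u. (r, u) \<in> ?R\<^sup>*}" by (rule finite_subset) simp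
  moreover have "(r, s) \<in> ?R\<^sup>*" using \<open>(r, s) \<in> H\<close> by blast
  ultimately obtain v where v: "(r, v) \<in> ?R\<^sup>*" "v \<noteq> r"
    and non_cut: "\<And>u. (r, u) \<in> ?R\<^sup>* \<Longrightarrow> u \<noteq> v \<Longrightarrow> (r, u) \<in> (isolate_vertex v ?R)\<^sup>*"
    using exists_non_cut_vertex r(2) by metis
  show thesis
  proof (rule that[OF r(1) _ v(2)])
    show "v \<in> component n H r" using v(1) reach unfolding component_def by blast
    show "(r, u) \<in> (isolate_vertex v ?R)\<^sup>*" if "u \<in> component n H r" "u \<noteq> v" for u
      using non_cut that unfolding component_def by blast
  qed
qed

lemma exists_isolate_vertex_NC:
  assumes G: "simple_graph n G" and H: "H \<in> NC n G" and "H \<noteq> {}"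
  obtains v where "isolate_vertex v H \<in> NC n G" "cc n (isolate_vertex v H) = cc n H + 1"
proof -
  obtain r s where "(r, s) \<in> H" using \<open>H \<noteq> {}\<close> by auto
  then obtain v where isolate: "r \<in> {1..n}" "v \<in> component n H r" "v \<noteq> r"
    "\<And>u. u \<in> component n H r \<Longrightarrow> u \<noteq> v \<Longrightarrow> (r, u) \<in> (isolate_vertex v (H \<union> H\<inverse>))\<^sup>*"
    using exists_non_cut_vertex_component[OF G NC_subset_graph[OF H]] by metis
  have "is_bond n G (isolate_vertex v H)"
    using is_bond_isolate_vertex[OF isolate G] H unfolding NC_def noncrossing_bond_def by blast
  moreover have "noncrossing (comp_partition n (isolate_vertex v H))"
    using noncrossing_isolate_vertex[OF isolate] H unfolding NC_def noncrossing_bond_def by blast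
  moreover have "cc n (isolate_vertex v H) = cc n H + 1"
    using merges_two_blocks_isolate_vertex[OF isolate] merges_two_blocks_iff_cc[OF isolate_vertex_subset]
    by blast
  ultimately show ?thesis using that unfolding NC_def noncrossing_bond_def by blast
qed

section \<open>Chains of noncrossing bonds\<close>

lemma covers_NC_if_cc_eq_Suc:
  assumes G: "simple_graph n G" and H: "H \<in> NC n G" and H': "H' \<in> NC n G"
    and "H \<subseteq> H'" and cc: "cc n H = cc n H' + 1"
  shows "covers (NC n G) H H'"
  unfolding covers_def
proof (intro conjI notI)
  show "H \<subset> H'" using \<open>H \<subseteq> H'\<close> cc by auto
  assume "\<exists>z\<in>NC n G. H \<subset> z \<and> z \<subset> H'"
  then obtain z where "z \<in> NC n G" "H \<subset> z" "z \<subset> H'" by blast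
  then have "cc n z < cc n H" "cc n H' < cc n z"
    using cc_strict_antimono[OF G] H H' by blast+
  then show False using cc by simp
qed (use H H' in simp_all)

lemma saturated_chain_NC_from_empty:
  assumes G: "simple_graph n G" and "H \<in> NC n G"
  obtains C where "saturated_chain (NC n G) C {} H" "card C = n - cc n H + 1"
  using assms(2)
proof (induction "card H" arbitrary: H thesis rule: less_induct)
  case less
  show ?case
  proof (cases "H = {}")
    case True
    have "saturated_chain (NC n G) {{}} {} H"
      unfolding saturated_chain_def is_chain_def using True empty_in_NC[OF G] by auto
    moreover have "card {{} :: (nat \<times> nat) set} = n - cc n H + 1" using True cc_empty by simp
    ultimately show ?thesis by (rule less.prems)
  next
    case False
    then obtain v where H': "isolate_vertex v H \<in> NC n G" "cc n (isolate_vertex v H) = cc n H + 1"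
      using exists_isolate_vertex_NC[OF G less.prems(2)] by blast
    then have cov: "covers (NC n G) (isolate_vertex v H) H"
      using covers_NC_if_cc_eq_Suc[OF G _ less.prems(2) isolate_vertex_subset] by blast
    have "finite H" using NC_subset_graph[OF less.prems(2)] finite_simple_graph[OF G] by (rule finite_subset)
    moreover have "isolate_vertex v H \<subset> H" using cov unfolding covers_def by blast
    ultimately have "card (isolate_vertex v H) < card H" by (simp add: psubset_card_mono)
    then obtain C where C: "saturated_chain (NC n G) C {} (isolate_vertex v H)"
      "card C = n - cc n (isolate_vertex v H) + 1"
      using less.hyps H'(1) by blast
    have "H \<notin> C" using saturated_chainD(6)[OF C(1)] \<open>isolate_vertex v H \<subset> H\<close> by blast
    have "finite C" using saturated_chainD(1)[OF C(1)] finite_NC[OF G] by (rule finite_subset)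
    have "saturated_chain (NC n G) (insert H C) {} H" by (rule saturated_chain_insert_cover[OF C(1) cov])
    moreover have "card (insert H C) = n - cc n H + 1"
      using C(2) H'(2) \<open>H \<notin> C\<close> \<open>finite C\<close> cc_le[of n "isolate_vertex v H"] by simp
    ultimately show ?thesis by (rule less.prems(1))
  qed
qed

lemma poset_rank_NC:
  assumes G: "simple_graph n G" and H: "H \<in> NC n G"
  shows "poset_rank (NC n G) H = n - cc n H"
proof -
  define A where "A = {card C - 1 | C. is_chain (NC n G) C \<and> finite C \<and> H \<in> C \<and> (\<forall>y\<in>C. y \<subseteq> H)}"
  have bound: "a \<le> n - cc n H" if "a \<in> A" for a
  proof -
    obtain C where C: "a = card C - 1" "is_chain (NC n G) C" "\<forall>y\<in>C. y \<subseteq> H"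
      using \<open>a \<in> A\<close> unfolding A_def by blast
    have above: "cc n H \<le> cc n y" if "y \<in> C" for y
    proof (cases "y = H")
      case False
      have "y \<in> NC n G" using C(2) that unfolding is_chain_def by blast
      moreover have "y \<subset> H" using C(3) that False by blast
      ultimately have "cc n H < cc n y" by (rule cc_strict_antimono[OF G _ H])
      then show ?thesis by simp
    qed simp
    have "cc n ` C \<subseteq> {cc n H..n}" using above cc_le by (simp add: image_subset_iff)
    then have "card C \<le> Suc n - cc n H"
      using card_chain_le_if_strict_antimono[OF C(2), of "cc n"] cc_strict_antimono[OF G] by blast
    then show ?thesis using C(1) by simp
  qed
  obtain C where C: "saturated_chain (NC n G) C {} H" "card C = n - cc n H + 1"
    using saturated_chain_NC_from_empty[OF G H] .
  have "finite C" using saturated_chainD(1)[OF C(1)] finite_NC[OF G] by (rule finite_subset)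
  then have "n - cc n H \<in> A"
    unfolding A_def using C saturated_chainD(4,6)[OF C(1)] unfolding saturated_chain_def
    by (intro CollectI exI[of _ C]) simp
  moreover have "finite A" using bound by (meson finite_atMost atMost_iff finite_subset subsetI)
  ultimately show ?thesis
    unfolding poset_rank_def A_def[symmetric] using bound by (intro Max_eqI) auto
qed

lemma graded_NC_if_covers_merge:
  assumes G: "simple_graph n G" and top: "G \<in> NC n G"
    and merge: "\<And>H H'. covers (NC n G) H H' \<Longrightarrow> merges_two_blocks (comp_partition n H) (comp_partition n H')"
  shows "graded (NC n G)"
  unfolding graded_def
proof (intro allI impI)
  define f where "f H = n - cc n H" for H
  have step: "f H' = f H + 1" if "covers (NC n G) H H'" for H H'
  proof -
    have "H \<subseteq> H'" using that unfolding covers_def by blast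
    then have "cc n H = cc n H' + 1" using merge[OF that] merges_two_blocks_iff_cc by blast
    then show ?thesis unfolding f_def using cc_le[of n H] by simp
  qed
  have bounds: "\<forall>x\<in>NC n G. {} \<subseteq> x \<and> x \<subseteq> G" using NC_subset_graph by blast
  have "card C + f {} = f G + 1" if "maximal_chain (NC n G) C" for C
    using card_saturated_chain[OF finite_NC[OF G] step
        maximal_chain_saturated[OF that empty_in_NC[OF G] top bounds]] .
  then show "card C = card D" if "maximal_chain (NC n G) C \<and> maximal_chain (NC n G) D" for C D
    using that by (metis add_right_cancel)
qed

lemma covers_merge_if_graded_NC:
  assumes G: "simple_graph n G" and graded: "graded (NC n G)" and cov: "covers (NC n G) H H'"
  shows "merges_two_blocks (comp_partition n H) (comp_partition n H')"
proof -
  have H: "H \<in> NC n G" and H': "H' \<in> NC n G" and "H \<subset> H'" using cov unfolding covers_def by blast+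
  obtain C where C: "saturated_chain (NC n G) C {} H" "card C = n - cc n H + 1"
    using saturated_chain_NC_from_empty[OF G H] .
  obtain C' where C': "saturated_chain (NC n G) C' {} H'" "card C' = n - cc n H' + 1"
    using saturated_chain_NC_from_empty[OF G H'] .
  have "H' \<notin> C" using saturated_chainD(6)[OF C(1)] \<open>H \<subset> H'\<close> by blast
  moreover have "finite C" using saturated_chainD(1)[OF C(1)] finite_NC[OF G] by (rule finite_subset)
  ultimately have "card (insert H' C) = n - cc n H + 2" using C(2) by simp
  moreover have "card (insert H' C) = card C'"
    using graded_saturated_chains_card_eq[OF finite_NC[OF G] graded _
        saturated_chain_insert_cover[OF C(1) cov] C'(1)] by blast
  ultimately have "cc n H = cc n H' + 1" using C'(2) cc_le[of n H] cc_le[of n H'] by simp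
  then show ?thesis using merges_two_blocks_iff_cc \<open>H \<subset> H'\<close> by blast
qed

theorem proposition2p10:
  fixes n :: nat and G :: "(nat \<times> nat) set"
  assumes "simple_graph n G"
    and "noncrossing_bond n G G"
  shows "(graded (NC n G) \<longleftrightarrow>
           (\<forall>H H'. covers (NC n G) H H' \<longrightarrow>
              merges_two_blocks (comp_partition n H) (comp_partition n H')))
       \<and> (graded (NC n G) \<longrightarrow>
           (\<forall>H \<in> NC n G. poset_rank (NC n G) H = n - cc n H))"
proof -
  have "G \<in> NC n G" using assms(2) unfolding NC_def by simp
  then show ?thesis
    using graded_NC_if_covers_merge[OF assms(1)] covers_merge_if_graded_NC[OF assms(1)]
      poset_rank_NC[OF assms(1)]
    by blast
qed

end
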